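(* Let $G=(V,E,L)$ be a parity graph with priorities in an index $I$, started from a vertex $p_0$. If $G$ is not even, then for every index $J$ with $\min(J)\in\{1,2\}$ and every $N\in\mathbb{N}$, Adam wins the priority transduction game $\mathrm{Reg}^J_N(G)$.
   Context: An index is a nonempty finite interval of $\mathbb{N}$. A sequence of priorities is parity accepting if its $\limsup$ is even. A parity graph is $(V,E,L)$ with $V$ countable, $E\subseteq V\times V$ (every vertex having an outgoing edge), $L:E\to I$; it is even if every infinite path from the start vertex has parity accepting priority sequence. Priority transduction game $\mathrm{Reg}^J_N(G)$: configurations consist of a current vertex, registers $r_j\in I$ for each $j$ with $2j\in J$ (plus $r_0$ if $1\in J$), and counters $c_{i,j}\in\mathbb{N}$ for odd $i\in I$ and register indices $j$. Initially the vertex is $p_0$, counters are $0$, registers are $\min(I)$. At each step: (a) Adam chooses an outgoing edge $e$ and the vertex is updated; (b) Eve chooses a register $r_j$; (c) output $w$: $w=1$ if $j=0$; else $w=2j$ if $r_j$ is even; else if $c_{r_j,j}=N$ then $w=2j+1$, $c_{r_j,j}:=0$, and Eve loses immediately if $2j+1\notin J$; else $w=2j$ and $c_{r_j,j}:=c_{r_j,j}+1$; (d) if $L(e)$ is even, $i:=L(e)$, else Eve chooses an odd $i\in I$ with $i\ge L(e)$; then $c_{i',j}:=0$ for all $i'<i$, $c_{r_j,j'}:=0$ for all $j'<j$, $r_{j'}:=\max(i,r_{j'})$ for all $j'>j$, and $r_j:=i$. Eve wins iff she never loses immediately and the output sequence is parity accepting; otherwise Adam wins. *)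

theory Defs
  imports Main "HOL-Library.Countable_Set" "HOL-Library.Extended_Nat" "HOL-Library.Liminf_Limsup"
begin

definition is_index :: "nat set \<Rightarrow> bool" where
  "is_index I \<longleftrightarrow> I \<noteq> {} \<and> finite I \<and>
     (\<forall>x y z. x \<in> I \<longrightarrow> z \<in> I \<longrightarrow> x \<le> y \<longrightarrow> y \<le> z \<longrightarrow> y \<in> I)"

definition parity_accepting :: "(nat \<Rightarrow> nat) \<Rightarrow> bool" where
  "parity_accepting w \<longleftrightarrow> (\<exists>m. limsup (\<lambda>n. enat (w n)) = enat m \<and> even m)"

definition parity_graph :: "'v set \<Rightarrow> ('v \<times> 'v) set \<Rightarrow> ('v \<times> 'v \<Rightarrow> nat) \<Rightarrow> nat set \<Rightarrow> bool" where
  "parity_graph V E L I \<longleftrightarrow> countable V \<and> E \<subseteq> V \<times> V \<and>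
     (\<forall>v\<in>V. \<exists>u. (v, u) \<in> E) \<and> is_index I \<and> (\<forall>e\<in>E. L e \<in> I)"

definition infinite_path_from :: "('v \<times> 'v) set \<Rightarrow> 'v \<Rightarrow> (nat \<Rightarrow> 'v) \<Rightarrow> bool" where
  "infinite_path_from E p0 \<rho> \<longleftrightarrow> \<rho> 0 = p0 \<and> (\<forall>n. (\<rho> n, \<rho> (Suc n)) \<in> E)"

definition even_graph :: "('v \<times> 'v) set \<Rightarrow> ('v \<times> 'v \<Rightarrow> nat) \<Rightarrow> 'v \<Rightarrow> bool" where
  "even_graph E L p0 \<longleftrightarrow>
     (\<forall>\<rho>. infinite_path_from E p0 \<rho> \<longrightarrow> parity_accepting (\<lambda>n. L (\<rho> n, \<rho> (Suc n))))"

text \<open>Only registers with index in reg_indices J and counters c_(i,j) with i odd in I and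
  j a register index are meaningful; the others are carried along but never influence play.\<close>
record 'v config =
  vert :: 'v
  reg :: "nat \<Rightarrow> nat"
  cnt :: "nat \<times> nat \<Rightarrow> nat"

definition reg_indices :: "nat set \<Rightarrow> nat set" where
  "reg_indices J = {j. 2 * j \<in> J} \<union> (if 1 \<in> J then {0} else {})"

definition init_config :: "nat set \<Rightarrow> 'v \<Rightarrow> 'v config" where
  "init_config I p0 = \<lparr>vert = p0, reg = (\<lambda>_. Min I), cnt = (\<lambda>_. 0)\<rparr>"

text \<open>A round: Adam's edge e, Eve's register choice j, Eve's priority choice i
  (the latter only used when L e is odd).\<close>
type_synonym 'v round = "('v \<times> 'v) \<times> nat \<times> nat"

definition out :: "nat \<Rightarrow> 'v config \<Rightarrow> nat \<Rightarrow> nat" where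
  "out N cf j =
     (if j = 0 then 1
      else if even (reg cf j) then 2 * j
      else if cnt cf (reg cf j, j) = N then 2 * j + 1
      else 2 * j)"

definition loses_now :: "nat set \<Rightarrow> nat \<Rightarrow> 'v config \<Rightarrow> nat \<Rightarrow> bool" where
  "loses_now J N cf j \<longleftrightarrow>
     j \<noteq> 0 \<and> odd (reg cf j) \<and> cnt cf (reg cf j, j) = N \<and> 2 * j + 1 \<notin> J"

definition eff_prio :: "('v \<times> 'v \<Rightarrow> nat) \<Rightarrow> 'v \<times> 'v \<Rightarrow> nat \<Rightarrow> nat" where
  "eff_prio L e i = (if even (L e) then L e else i)"

definition eve_legal :: "nat set \<Rightarrow> nat set \<Rightarrow> ('v \<times> 'v \<Rightarrow> nat) \<Rightarrow> 'v \<times> 'v \<Rightarrow> nat \<Rightarrow> nat \<Rightarrow> bool" where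
  "eve_legal I J L e j i \<longleftrightarrow> j \<in> reg_indices J \<and>
     (odd (L e) \<longrightarrow> i \<in> I \<and> odd i \<and> L e \<le> i)"

definition adam_legal :: "('v \<times> 'v) set \<Rightarrow> 'v config \<Rightarrow> 'v \<times> 'v \<Rightarrow> bool" where
  "adam_legal E cf e \<longleftrightarrow> e \<in> E \<and> fst e = vert cf"

text \<open>One full round (a)-(d). The counter update of step (c) is applied first, then
  the resets and register updates of step (d), using the value of r_j before step (d).\<close>
definition step :: "nat \<Rightarrow> ('v \<times> 'v \<Rightarrow> nat) \<Rightarrow> 'v config \<Rightarrow> 'v round \<Rightarrow> 'v config" where
  "step N L cf rd = (case rd of (e, j, ich) \<Rightarrow>
     let r = reg cf; c = cnt cf;
         c1 = (if j \<noteq> 0 \<and> odd (r j)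
               then (if c (r j, j) = N then c((r j, j) := 0) else c((r j, j) := c (r j, j) + 1))
               else c);
         i = eff_prio L e ich;
         c2 = (\<lambda>(a, b). if b = j \<and> a < i then 0
                        else if a = r j \<and> b < j then 0
                        else c1 (a, b));
         r2 = (\<lambda>k. if k = j then i else if j < k then max i (r k) else r k)
     in \<lparr>vert = snd e, reg = r2, cnt = c2\<rparr>)"

definition conf_after :: "nat set \<Rightarrow> nat \<Rightarrow> ('v \<times> 'v \<Rightarrow> nat) \<Rightarrow> 'v \<Rightarrow> 'v round list \<Rightarrow> 'v config" where
  "conf_after I N L p0 h = foldl (step N L) (init_config I p0) h"

type_synonym 'v adam_strategy = "'v round list \<Rightarrow> 'v \<times> 'v"
type_synonym 'v eve_strategy = "'v round list \<Rightarrow> 'v \<times> 'v \<Rightarrow> nat \<times> nat"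

definition next_round :: "'v adam_strategy \<Rightarrow> 'v eve_strategy \<Rightarrow> 'v round list \<Rightarrow> 'v round" where
  "next_round sa se h = (let e = sa h in (e, se h e))"

primrec hist :: "'v adam_strategy \<Rightarrow> 'v eve_strategy \<Rightarrow> nat \<Rightarrow> 'v round list" where
  "hist sa se 0 = []"
| "hist sa se (Suc n) = hist sa se n @ [next_round sa se (hist sa se n)]"

definition play_round :: "'v adam_strategy \<Rightarrow> 'v eve_strategy \<Rightarrow> nat \<Rightarrow> 'v round" where
  "play_round sa se n = next_round sa se (hist sa se n)"

definition adam_plays_legally ::
  "nat set \<Rightarrow> nat \<Rightarrow> ('v \<times> 'v) set \<Rightarrow> ('v \<times> 'v \<Rightarrow> nat) \<Rightarrow> 'v \<Rightarrow> 'v adam_strategy \<Rightarrow> 'v eve_strategy \<Rightarrow> bool" where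
  "adam_plays_legally I N E L p0 sa se \<longleftrightarrow>
     (\<forall>n. adam_legal E (conf_after I N L p0 (hist sa se n)) (fst (play_round sa se n)))"

definition eve_wins_play ::
  "nat set \<Rightarrow> nat set \<Rightarrow> nat \<Rightarrow> ('v \<times> 'v \<Rightarrow> nat) \<Rightarrow> 'v \<Rightarrow> 'v adam_strategy \<Rightarrow> 'v eve_strategy \<Rightarrow> bool" where
  "eve_wins_play I J N L p0 sa se \<longleftrightarrow>
     (\<forall>n. case play_round sa se n of (e, j, i) \<Rightarrow>
            eve_legal I J L e j i \<and>
            \<not> loses_now J N (conf_after I N L p0 (hist sa se n)) j) \<and>
     parity_accepting (\<lambda>n. case play_round sa se n of (e, j, i) \<Rightarrow>
                              out N (conf_after I N L p0 (hist sa se n)) j)"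

definition adam_wins ::
  "nat set \<Rightarrow> nat set \<Rightarrow> nat \<Rightarrow> ('v \<times> 'v) set \<Rightarrow> ('v \<times> 'v \<Rightarrow> nat) \<Rightarrow> 'v \<Rightarrow> bool" where
  "adam_wins I J N E L p0 \<longleftrightarrow>
     (\<exists>sa. \<forall>se. adam_plays_legally I N E L p0 sa se \<and> \<not> eve_wins_play I J N L p0 sa se)"

end

theory Submission
  imports Defs
begin

(*
  Adam follows a path of G on which the largest priority d occurring infinitely often is odd.
  Let j be the largest register that Eve selects infinitely often; if j = 0, the output is
  eventually 1. Otherwise, once Eve no longer selects registers above j, every priority she
  writes is odd or below d, so from the next selection of j on, r_j always holds an odd value or
  one below d. Each occurrence of d then leaves an odd value of at least d in r_j, which until the
  next selection of j can only be replaced by larger odd values. Let v be the largest odd value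
  of at least d that r_j holds infinitely often when j is selected. Eventually Eve never writes a
  priority above v into r_j, since it would be odd and persist until j is selected again,
  contradicting the maximality of v. Hence the counter c_(v,j) is eventually reset only when it
  overflows, and it grows whenever j is selected while r_j = v; being bounded by N, it
  overflows infinitely often. So the output 2j+1 occurs infinitely often while all later outputs
  are at most 2j+1.
*)

lemma limsup_enat_eqI:
  fixes w :: "nat \<Rightarrow> nat"
  assumes "\<forall>\<^sub>F n in sequentially. w n \<le> m" and "\<exists>\<^sub>F n in sequentially. w n = m"
  shows "limsup (\<lambda>n. enat (w n)) = enat m"
proof (rule antisym)
  show "limsup (\<lambda>n. enat (w n)) \<le> enat m"
    using assms(1) by (intro Limsup_bounded) (simp add: eventually_mono)
  show "enat m \<le> limsup (\<lambda>n. enat (w n))"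
  proof (rule Limsup_greatest)
    fix P assume "eventually P sequentially"
    then obtain n where "P n" "w n = m"
      using frequently_eventually_frequently[OF assms(2)] by (auto dest: frequently_ex)
    then show "enat m \<le> (SUP n\<in>Collect P. enat (w n))"
      by (auto intro: SUP_upper2)
  qed
qed

lemma parity_accepting_iff_even:
  assumes "\<forall>\<^sub>F n in sequentially. w n \<le> m" and "\<exists>\<^sub>F n in sequentially. w n = m"
  shows "parity_accepting w \<longleftrightarrow> even m"
  using limsup_enat_eqI[OF assms] by (simp add: parity_accepting_def)

lemma frequent_maximal_value:
  fixes w :: "'b \<Rightarrow> 'a::linorder"
  assumes "finite A" and "\<And>x. w x \<in> A" and "\<exists>\<^sub>F x in F. P x"
  obtains m where "m \<in> A" and "\<exists>\<^sub>F x in F. P x \<and> w x = m"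
    and "\<forall>\<^sub>F x in F. P x \<longrightarrow> w x \<le> m"
proof -
  define S where "S = {m \<in> A. \<exists>\<^sub>F x in F. P x \<and> w x = m}"
  have "\<exists>m\<in>A. \<exists>\<^sub>F x in F. P x \<and> w x = m"
    by (rule frequently_bex_finite[OF assms(1)]) (use assms(2,3) in \<open>auto elim: frequently_elim1\<close>)
  then have "S \<noteq> {}"
    by (auto simp: S_def)
  moreover have "finite S"
    using assms(1) by (simp add: S_def)
  ultimately have "Max S \<in> S"
    by simp
  have "\<forall>\<^sub>F x in F. \<not> (P x \<and> w x = m)" if "m \<in> A" "Max S < m" for m
  proof -
    have "m \<notin> S"
      using that(2) Max_ge[OF \<open>finite S\<close>] leD by blast
    then show ?thesis
      using that(1) by (simp add: S_def not_frequently)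
  qed
  then have "\<forall>\<^sub>F x in F. \<forall>m\<in>{m \<in> A. Max S < m}. \<not> (P x \<and> w x = m)"
    using assms(1) by (intro eventually_ball_finite) auto
  then have "\<forall>\<^sub>F x in F. P x \<longrightarrow> w x \<le> Max S"
    by (rule eventually_mono) (use assms(2) not_less in fastforce)
  with \<open>Max S \<in> S\<close> show thesis
    using that by (auto simp: S_def)
qed

lemma frequent_maximal_value_sequentially:
  fixes w :: "nat \<Rightarrow> 'a::linorder"
  assumes "finite A" and "\<And>n. w n \<in> A"
  obtains m where "\<exists>\<^sub>F n in sequentially. w n = m" and "\<forall>\<^sub>F n in sequentially. w n \<le> m"
proof -
  have "\<exists>\<^sub>F n in sequentially. True"
    by simp
  from frequent_maximal_value[where A = A and w = w, OF assms this] show thesis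
    using that by auto
qed

lemma bounded_nat_seq_not_frequently_increasing:
  fixes c :: "nat \<Rightarrow> nat"
  assumes bounded: "\<And>n. c n \<le> B" and mono: "\<forall>\<^sub>F n in sequentially. c n \<le> c (Suc n)"
  shows "\<not> (\<exists>\<^sub>F n in sequentially. c n < c (Suc n))"
proof
  assume incr: "\<exists>\<^sub>F n in sequentially. c n < c (Suc n)"
  obtain T where T: "\<And>n. n \<ge> T \<Longrightarrow> c n \<le> c (Suc n)"
    using mono by (auto simp: eventually_sequentially)
  have c_mono: "c n \<le> c m" if "T \<le> n" "n \<le> m" for n m
    using that(2) by (induction m rule: dec_induct) (use T that(1) order_trans in auto)
  have "\<exists>n\<ge>T. k \<le> c n" for k
  proof (induction k)
    case (Suc k)
    then obtain n where "n \<ge> T" "k \<le> c n" by blast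
    moreover obtain m where "m \<ge> n" "c m < c (Suc m)"
      using incr by (auto simp: frequently_sequentially)
    ultimately show ?case
      using c_mono[of n m] by (intro exI[of _ "Suc m"]) auto
  qed auto
  then show False
    using bounded not_less_eq_eq by blast
qed

lemma finite_reg_indices: "finite J \<Longrightarrow> finite (reg_indices J)"
proof -
  assume "finite J"
  then have "finite ((\<lambda>j::nat. 2 * j) -` J)"
    by (rule finite_vimageI) (simp add: inj_on_def)
  then show ?thesis
    by (simp add: reg_indices_def vimage_def)
qed

lemma vert_step: "vert (step N L cf rd) = snd (fst rd)"
  by (simp add: step_def Let_def split: prod.split)

lemma reg_step:
  "reg (step N L cf (e, j, i)) k =
     (if k = j then eff_prio L e i else if j < k then max (eff_prio L e i) (reg cf k) else reg cf k)"
  by (simp add: step_def Let_def)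

locale reg_play =
  fixes I J :: "nat set" and N :: nat and L :: "'v \<times> 'v \<Rightarrow> nat"
    and cf :: "nat \<Rightarrow> 'v config" and e :: "nat \<Rightarrow> 'v \<times> 'v" and j i :: "nat \<Rightarrow> nat"
  assumes cf_Suc: "cf (Suc n) = step N L (cf n) (e n, j n, i n)"
    and reg_cf_0: "reg (cf 0) = (\<lambda>_. Min I)"
    and cnt_cf_0: "cnt (cf 0) = (\<lambda>_. 0)"
    and finite_I: "finite I" and I_nonempty: "I \<noteq> {}"
    and L_in_I: "L (e n) \<in> I"
    and legal: "eve_legal I J L (e n) (j n) (i n)"
    and finite_J: "finite J"
begin

abbreviation prio :: "nat \<Rightarrow> nat" where
  "prio n \<equiv> eff_prio L (e n) (i n)"

lemma prio_in_I: "prio n \<in> I"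
  using L_in_I[of n] legal[of n] by (simp add: eff_prio_def eve_legal_def)

lemma L_le_prio: "L (e n) \<le> prio n"
  using legal[of n] by (simp add: eff_prio_def eve_legal_def)

lemma odd_prio: "odd (L (e n)) \<Longrightarrow> odd (prio n)"
  using legal[of n] by (simp add: eff_prio_def eve_legal_def)

lemma even_prio_eq_L: "even (prio n) \<Longrightarrow> prio n = L (e n)"
  using legal[of n] by (auto simp: eff_prio_def eve_legal_def)

lemma j_in_reg_indices: "j n \<in> reg_indices J"
  using legal[of n] by (simp add: eve_legal_def)

lemma reg_cf_Suc:
  "reg (cf (Suc n)) k =
     (if k = j n then prio n else if j n < k then max (prio n) (reg (cf n) k) else reg (cf n) k)"
  by (simp add: cf_Suc reg_step)

lemma reg_in_I: "reg (cf n) k \<in> I"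
  by (induction n arbitrary: k) (auto simp: reg_cf_0 finite_I I_nonempty reg_cf_Suc prio_in_I max_def)

lemma cnt_le_N: "cnt (cf n) x \<le> N"
proof (induction n arbitrary: x)
  case 0
  show ?case by (simp add: cnt_cf_0)
next
  case (Suc n)
  then show ?case
    using le_neq_implies_less[OF Suc[of "(reg (cf n) (j n), j n)"]]
    by (cases x) (auto simp: cf_Suc step_def Let_def)
qed

lemma frequently_counter_full:
  assumes "jm \<noteq> 0" and "odd v"
    and below: "\<forall>\<^sub>F n in sequentially. j n \<le> jm"
    and prio_le: "\<forall>\<^sub>F n in sequentially. j n = jm \<longrightarrow> prio n \<le> v"
    and visits: "\<exists>\<^sub>F n in sequentially. j n = jm \<and> reg (cf n) jm = v"
  shows "\<exists>\<^sub>F n in sequentially. j n = jm \<and> reg (cf n) jm = v \<and> cnt (cf n) (v, jm) = N"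
proof (rule ccontr)
  define c where "c n = cnt (cf n) (v, jm)" for n
  assume "\<not> ?thesis"
  then have never_full: "\<forall>\<^sub>F n in sequentially. \<not> (j n = jm \<and> reg (cf n) jm = v \<and> c n = N)"
    by (simp add: not_frequently c_def)
  have "\<forall>\<^sub>F n in sequentially. c n \<le> c (Suc n)"
    using below prio_le never_full
    by eventually_elim (auto simp: c_def cf_Suc step_def Let_def)
  moreover have "\<exists>\<^sub>F n in sequentially. c n < c (Suc n)"
    using frequently_eventually_frequently[OF visits eventually_conj[OF prio_le never_full]]
    by (rule frequently_elim1) (use assms(1,2) in \<open>auto simp: c_def cf_Suc step_def Let_def\<close>)
  ultimately show False
    using bounded_nat_seq_not_frequently_increasing[of c N] cnt_le_N by (simp add: c_def)
qed

end

locale losing_reg_play = reg_play +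
  fixes d :: nat
  assumes odd_d: "odd d"
    and eventually_L_le_d: "\<forall>\<^sub>F n in sequentially. L (e n) \<le> d"
    and frequently_L_eq_d: "\<exists>\<^sub>F n in sequentially. L (e n) = d"
begin

lemma eventually_prio_odd_or_lt_d: "\<forall>\<^sub>F n in sequentially. odd (prio n) \<or> prio n < d"
  using eventually_L_le_d
  by (rule eventually_mono) (metis even_prio_eq_L le_neq_implies_less odd_d)

end

locale top_register = losing_reg_play +
  fixes jm :: nat
  assumes frequently_top: "\<exists>\<^sub>F n in sequentially. j n = jm"
    and eventually_le_top: "\<forall>\<^sub>F n in sequentially. j n \<le> jm"
begin

abbreviation top_reg :: "nat \<Rightarrow> nat" where
  "top_reg n \<equiv> reg (cf n) jm"

lemma eventually_le_top_and_prio_odd_or_lt_d: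
  "\<forall>\<^sub>F n in sequentially. j n \<le> jm \<and> (odd (prio n) \<or> prio n < d)"
  using eventually_le_top eventually_prio_odd_or_lt_d by (rule eventually_conj)

lemma top_reg_Suc_max:
  "j n \<le> jm \<Longrightarrow> top_reg (Suc n) = (if j n = jm then prio n else max (prio n) (top_reg n))"
  by (simp add: reg_cf_Suc)

lemma eventually_top_reg_odd_or_lt_d: "\<forall>\<^sub>F n in sequentially. odd (top_reg n) \<or> top_reg n < d"
proof -
  obtain T where T: "\<And>n. n \<ge> T \<Longrightarrow> j n \<le> jm \<and> (odd (prio n) \<or> prio n < d)"
    using eventually_le_top_and_prio_odd_or_lt_d by (auto simp: eventually_sequentially)
  obtain t where "t \<ge> T" "j t = jm"
    using frequently_top by (auto simp: frequently_sequentially)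
  have "odd (top_reg n) \<or> top_reg n < d" if "Suc t \<le> n" for n
    using that
  proof (induction n rule: dec_induct)
    case base
    show ?case using T[of t] \<open>t \<ge> T\<close> \<open>j t = jm\<close> by (simp add: top_reg_Suc_max)
  next
    case (step n)
    then show ?case using T[of n] \<open>t \<ge> T\<close> by (auto simp: top_reg_Suc_max max_def)
  qed
  then show ?thesis
    by (auto simp: eventually_sequentially)
qed

lemma eventually_odd_top_reg_persists:
  "\<forall>\<^sub>F n in sequentially. \<forall>\<theta>\<ge>d. odd (top_reg n) \<and> \<theta> \<le> top_reg n \<longrightarrow>
     (\<exists>m\<ge>n. j m = jm \<and> odd (top_reg m) \<and> \<theta> \<le> top_reg m)"
proof -
  obtain T where T: "\<And>n. n \<ge> T \<Longrightarrow> j n \<le> jm \<and> (odd (prio n) \<or> prio n < d)"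
    using eventually_le_top_and_prio_odd_or_lt_d by (auto simp: eventually_sequentially)
  have "\<exists>m\<ge>n. j m = jm \<and> odd (top_reg m) \<and> \<theta> \<le> top_reg m"
    if "n \<ge> T" "d \<le> \<theta>" "odd (top_reg n)" "\<theta> \<le> top_reg n" for n \<theta>
  proof (rule ccontr)
    assume none: "\<not> ?thesis"
    have "odd (top_reg k) \<and> \<theta> \<le> top_reg k \<and> j k \<noteq> jm" if "n \<le> k" for k
      using that
    proof (induction k rule: dec_induct)
      case base
      show ?case using none \<open>odd (top_reg n)\<close> \<open>\<theta> \<le> top_reg n\<close> by auto
    next
      case (step k)
      then have "odd (top_reg (Suc k)) \<and> \<theta> \<le> top_reg (Suc k)"
        using T[of k] \<open>n \<ge> T\<close> \<open>d \<le> \<theta>\<close> by (auto simp: top_reg_Suc_max max_def)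
      then show ?case using none step.hyps by auto
    qed
    moreover obtain m where "m \<ge> n" "j m = jm"
      using frequently_top by (auto simp: frequently_sequentially)
    ultimately show False
      by blast
  qed
  then show ?thesis
    unfolding eventually_sequentially by blast
qed

lemma frequently_top_reg_odd_ge_d:
  "\<exists>\<^sub>F n in sequentially. j n = jm \<and> odd (top_reg n) \<and> d \<le> top_reg n"
proof -
  have "\<forall>\<^sub>F n in sequentially. j n \<le> jm \<and> (odd (top_reg n) \<or> top_reg n < d) \<and>
      (\<forall>\<theta>\<ge>d. odd (top_reg (Suc n)) \<and> \<theta> \<le> top_reg (Suc n) \<longrightarrow>
         (\<exists>m\<ge>Suc n. j m = jm \<and> odd (top_reg m) \<and> \<theta> \<le> top_reg m))"
    using eventually_le_top eventually_top_reg_odd_or_lt_d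
      eventually_odd_top_reg_persists[THEN eventually_sequentially_Suc[THEN iffD2]]
    by (intro eventually_conj)
  from frequently_L_eq_d this
  have "\<exists>\<^sub>F n in sequentially. \<exists>m\<ge>n. j m = jm \<and> odd (top_reg m) \<and> d \<le> top_reg m"
  proof (rule frequently_eventually_frequently[THEN frequently_elim1])
    fix n
    assume n: "L (e n) = d \<and> j n \<le> jm \<and> (odd (top_reg n) \<or> top_reg n < d) \<and>
      (\<forall>\<theta>\<ge>d. odd (top_reg (Suc n)) \<and> \<theta> \<le> top_reg (Suc n) \<longrightarrow>
         (\<exists>m\<ge>Suc n. j m = jm \<and> odd (top_reg m) \<and> \<theta> \<le> top_reg m))"
    then have "odd (prio n)" "d \<le> prio n"
      using odd_prio[of n] L_le_prio[of n] odd_d by auto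
    with n have "odd (top_reg (Suc n)) \<and> d \<le> top_reg (Suc n)"
      by (auto simp: top_reg_Suc_max max_def)
    with n show "\<exists>m\<ge>n. j m = jm \<and> odd (top_reg m) \<and> d \<le> top_reg m"
      using Suc_leD by blast
  qed
  then show ?thesis
    unfolding frequently_sequentially by (meson order_trans)
qed

lemma eventually_prio_le_top_value:
  assumes "d \<le> v"
    and v_max: "\<forall>\<^sub>F n in sequentially. j n = jm \<and> odd (top_reg n) \<and> d \<le> top_reg n \<longrightarrow> top_reg n \<le> v"
  shows "\<forall>\<^sub>F n in sequentially. j n = jm \<longrightarrow> prio n \<le> v"
proof -
  have "prio n \<le> v"
    if prio_n: "odd (prio n) \<or> prio n < d"
      and persists: "\<forall>\<theta>\<ge>d. odd (top_reg (Suc n)) \<and> \<theta> \<le> top_reg (Suc n) \<longrightarrow>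
         (\<exists>m\<ge>Suc n. j m = jm \<and> odd (top_reg m) \<and> \<theta> \<le> top_reg m)"
      and later_le_v: "\<forall>m\<ge>n. j m = jm \<and> odd (top_reg m) \<and> d \<le> top_reg m \<longrightarrow> top_reg m \<le> v"
      and "j n = jm"
    for n
  proof (rule ccontr)
    assume "\<not> prio n \<le> v"
    with prio_n \<open>j n = jm\<close> \<open>d \<le> v\<close>
    have "odd (top_reg (Suc n))" "prio n \<le> top_reg (Suc n)" "d \<le> prio n"
      by (auto simp: reg_cf_Suc)
    then obtain m where "m \<ge> Suc n" "j m = jm" "odd (top_reg m)" "prio n \<le> top_reg m"
      using persists by blast
    moreover from this have "top_reg m \<le> v"
      using later_le_v \<open>d \<le> prio n\<close> by simp
    ultimately show False
      using \<open>\<not> prio n \<le> v\<close> by simp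
  qed
  moreover have "\<forall>\<^sub>F n in sequentially. (odd (prio n) \<or> prio n < d) \<and>
      (\<forall>\<theta>\<ge>d. odd (top_reg (Suc n)) \<and> \<theta> \<le> top_reg (Suc n) \<longrightarrow>
         (\<exists>m\<ge>Suc n. j m = jm \<and> odd (top_reg m) \<and> \<theta> \<le> top_reg m)) \<and>
      (\<forall>m\<ge>n. j m = jm \<and> odd (top_reg m) \<and> d \<le> top_reg m \<longrightarrow> top_reg m \<le> v)"
    using eventually_prio_odd_or_lt_d
      eventually_odd_top_reg_persists[THEN eventually_sequentially_Suc[THEN iffD2]]
      eventually_all_ge_at_top[OF v_max]
    by (intro eventually_conj)
  ultimately show ?thesis
    by (simp add: eventually_mono)
qed

lemma not_parity_accepting_out_top:
  assumes "jm \<noteq> 0"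
  shows "\<not> parity_accepting (\<lambda>n. out N (cf n) (j n))"
proof -
  obtain v where "v \<in> I"
    and visits: "\<exists>\<^sub>F n in sequentially. (j n = jm \<and> odd (top_reg n) \<and> d \<le> top_reg n) \<and> top_reg n = v"
    and v_max: "\<forall>\<^sub>F n in sequentially. j n = jm \<and> odd (top_reg n) \<and> d \<le> top_reg n \<longrightarrow> top_reg n \<le> v"
    by (rule frequent_maximal_value[where w = top_reg, OF finite_I reg_in_I frequently_top_reg_odd_ge_d])
  have "odd v" "d \<le> v"
    using frequently_ex[OF visits] by auto
  have "\<exists>\<^sub>F n in sequentially. j n = jm \<and> top_reg n = v"
    using visits by (rule frequently_elim1) simp
  then have "\<exists>\<^sub>F n in sequentially. j n = jm \<and> top_reg n = v \<and> cnt (cf n) (v, jm) = N"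
    by (rule frequently_counter_full[OF assms \<open>odd v\<close> eventually_le_top
          eventually_prio_le_top_value[OF \<open>d \<le> v\<close> v_max]])
  then have "\<exists>\<^sub>F n in sequentially. out N (cf n) (j n) = 2 * jm + 1"
    by (rule frequently_elim1) (use assms \<open>odd v\<close> in \<open>simp add: out_def\<close>)
  moreover have "\<forall>\<^sub>F n in sequentially. out N (cf n) (j n) \<le> 2 * jm + 1"
    using eventually_le_top
    by (rule eventually_mono) (auto simp: out_def)
  ultimately show ?thesis
    using parity_accepting_iff_even by fastforce
qed

end

lemma (in losing_reg_play) not_parity_accepting_out:
  "\<not> parity_accepting (\<lambda>n. out N (cf n) (j n))"
proof -
  obtain jm where top: "\<exists>\<^sub>F n in sequentially. j n = jm"
    and below: "\<forall>\<^sub>F n in sequentially. j n \<le> jm"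
    by (rule frequent_maximal_value_sequentially[OF finite_reg_indices[OF finite_J] j_in_reg_indices])
  show ?thesis
  proof (cases "jm = 0")
    case True
    have "\<forall>\<^sub>F n in sequentially. out N (cf n) (j n) = 1"
      using below by (rule eventually_mono) (simp add: True out_def)
    then show ?thesis
      using parity_accepting_iff_even[of "\<lambda>n. out N (cf n) (j n)" 1]
      by (simp add: eventually_frequently eventually_mono)
  next
    case False
    interpret top_register I J N L cf e j i d jm
      using top below by unfold_locales
    show ?thesis
      by (rule not_parity_accepting_out_top[OF False])
  qed
qed

lemma not_even_graph_odd_path:
  assumes "parity_graph V E L I" and "\<not> even_graph E L p0"
  obtains \<rho> d where "infinite_path_from E p0 \<rho>" and "odd d"
    and "\<forall>\<^sub>F n in sequentially. L (\<rho> n, \<rho> (Suc n)) \<le> d"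
    and "\<exists>\<^sub>F n in sequentially. L (\<rho> n, \<rho> (Suc n)) = d"
proof -
  obtain \<rho> where path: "infinite_path_from E p0 \<rho>"
    and rejecting: "\<not> parity_accepting (\<lambda>n. L (\<rho> n, \<rho> (Suc n)))"
    using assms(2) by (auto simp: even_graph_def)
  have "finite I" "\<And>n. L (\<rho> n, \<rho> (Suc n)) \<in> I"
    using assms(1) path by (auto simp: parity_graph_def is_index_def infinite_path_from_def)
  then obtain d where "\<exists>\<^sub>F n in sequentially. L (\<rho> n, \<rho> (Suc n)) = d"
    and "\<forall>\<^sub>F n in sequentially. L (\<rho> n, \<rho> (Suc n)) \<le> d"
    by (rule frequent_maximal_value_sequentially)
  with rejecting path show thesis
    using that parity_accepting_iff_even by auto
qed

definition path_strategy :: "(nat \<Rightarrow> 'v) \<Rightarrow> 'v adam_strategy" where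
  "path_strategy \<rho> h = (\<rho> (length h), \<rho> (Suc (length h)))"

lemma length_hist [simp]: "length (hist sa se n) = n"
  by (induction n) auto

lemma conf_after_hist_Suc:
  "conf_after I N L p0 (hist sa se (Suc n)) =
     step N L (conf_after I N L p0 (hist sa se n)) (play_round sa se n)"
  by (simp add: conf_after_def play_round_def)

lemma edge_play_round_path_strategy: "fst (play_round (path_strategy \<rho>) se n) = (\<rho> n, \<rho> (Suc n))"
  by (simp add: play_round_def next_round_def path_strategy_def Let_def)

lemma vert_conf_after_path_strategy:
  assumes "\<rho> 0 = p0"
  shows "vert (conf_after I N L p0 (hist (path_strategy \<rho>) se n)) = \<rho> n"
proof (cases n)
  case 0
  then show ?thesis
    using assms by (simp add: conf_after_def init_config_def)
next
  case (Suc m)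
  show ?thesis
    unfolding Suc conf_after_hist_Suc vert_step edge_play_round_path_strategy by simp
qed

lemma adam_plays_legally_path_strategy:
  "infinite_path_from E p0 \<rho> \<Longrightarrow> adam_plays_legally I N E L p0 (path_strategy \<rho>) se"
  by (simp add: adam_plays_legally_def adam_legal_def infinite_path_from_def
      edge_play_round_path_strategy vert_conf_after_path_strategy)

lemma eve_loses_against_path_strategy:
  assumes "parity_graph V E L I" and "is_index J" and path: "infinite_path_from E p0 \<rho>"
    and "odd d" and "\<forall>\<^sub>F n in sequentially. L (\<rho> n, \<rho> (Suc n)) \<le> d"
    and "\<exists>\<^sub>F n in sequentially. L (\<rho> n, \<rho> (Suc n)) = d"
  shows "\<not> eve_wins_play I J N L p0 (path_strategy \<rho>) se"
proof
  let ?cf = "\<lambda>n. conf_after I N L p0 (hist (path_strategy \<rho>) se n)"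
  let ?e = "\<lambda>n. fst (play_round (path_strategy \<rho>) se n)"
  let ?j = "\<lambda>n. fst (snd (play_round (path_strategy \<rho>) se n))"
  let ?i = "\<lambda>n. snd (snd (play_round (path_strategy \<rho>) se n))"
  assume wins: "eve_wins_play I J N L p0 (path_strategy \<rho>) se"
  have "losing_reg_play I J N L ?cf ?e ?j ?i d"
  proof unfold_locales
    show "?cf (Suc n) = step N L (?cf n) (?e n, ?j n, ?i n)" for n
      unfolding conf_after_hist_Suc by simp
    show "eve_legal I J L (?e n) (?j n) (?i n)" for n
      using wins by (simp add: eve_wins_play_def case_prod_beta)
  qed (use assms in \<open>auto simp: conf_after_def init_config_def parity_graph_def is_index_def
      infinite_path_from_def edge_play_round_path_strategy\<close>)
  then have "\<not> parity_accepting (\<lambda>n. out N (?cf n) (?j n))"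
    by (rule losing_reg_play.not_parity_accepting_out)
  with wins show False
    by (simp add: eve_wins_play_def case_prod_beta)
qed

theorem lemma2:
  fixes V :: "'v set" and E :: "('v \<times> 'v) set" and L :: "'v \<times> 'v \<Rightarrow> nat"
    and I J :: "nat set" and p0 :: 'v and N :: nat
  assumes "parity_graph V E L I"
    and "p0 \<in> V"
    and "\<not> even_graph E L p0"
    and "is_index J"
    and "Min J \<in> {1, 2}"
  shows "adam_wins I J N E L p0"
proof -
  obtain \<rho> d where "infinite_path_from E p0 \<rho>" "odd d"
    "\<forall>\<^sub>F n in sequentially. L (\<rho> n, \<rho> (Suc n)) \<le> d"
    "\<exists>\<^sub>F n in sequentially. L (\<rho> n, \<rho> (Suc n)) = d"
    using not_even_graph_odd_path[OF assms(1,3)] by blast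
  then show ?thesis
    unfolding adam_wins_def
    by (intro exI[of _ "path_strategy \<rho>"] allI conjI adam_plays_legally_path_strategy
        eve_loses_against_path_strategy[OF assms(1,4)])
qed

end
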